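(* Let $m\ge1$. Every word $w$ over $\{a,b\}$ admits a factorization $w=w_1w_2w_3$ with $w_1\in L^{\epsilon}_{\vdash_{\{ba^m,a\}}}$, $w_2\in L^{\epsilon}_{\vdash_{\{ba^m,b\}}}$ and $|w_3|_a<m$, such that moreover, whenever $w$ belongs to the shuffle of $x$ copies of $ba^m$ and some word $w'$, one has $x\le |w_1|_b+|w_2|_a/m$.
   Context: For words $u,v$, the shuffle $u \sqcup\!\sqcup v$ is the set of all words $u_1v_1\cdots u_kv_k$ with $k\ge 1$, $u=u_1\cdots u_k$, $v=v_1\cdots v_k$ (pieces possibly empty); shuffles of several words are defined iteratively. For a finite set $I$ of words, $v \vdash_I w$ means $w \in v \sqcup\!\sqcup u$ for some $u\in I$; $\vdash_I^*$ is its reflexive-transitive closure and $L^{\epsilon}_{\vdash_I}=\{w : \epsilon \vdash_I^* w\}$. *)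

theory Defs
  imports Complex_Main
begin

datatype ab = a | b

definition derives :: "'s list set \<Rightarrow> 's list \<Rightarrow> 's list \<Rightarrow> bool" where
  "derives I v w \<longleftrightarrow> (\<exists>u\<in>I. w \<in> shuffles v u)"

definition L_eps :: "'s list set \<Rightarrow> 's list set" where
  "L_eps I = {w. (derives I)\<^sup>*\<^sup>* [] w}"

definition shuffle_copies :: "nat \<Rightarrow> 's list \<Rightarrow> 's list \<Rightarrow> 's list set" where
  "shuffle_copies n u w' = ((\<lambda>S. \<Union>v\<in>S. shuffles v u) ^^ n) {w'}"

end

theory Submission
  imports Defs "HOL-Library.Sublist"
begin

(* Give every letter b the height m and every letter a the height -1, and cut w after a prefix w1
   of minimal height. Then every suffix of w1 has height <= 0 and every prefix of the remainder
   has height >= 0. The first condition suffices for a derivation from the empty word by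
   {ba^m, a}, the second one, together with m dividing the number of letters a, for a derivation
   by {ba^m, b}: in both cases peel off the last b with the letters a following it. Splitting off
   a tail w3 with fewer than m letters a makes that number divisible by m for the remainder w2.
   Finally, each copy of ba^m in a shuffle decomposition of w has its b inside w1 or all of its
   m letters a inside w2 w3. *)

lemma count_list_replicate [simp]:
  "count_list (replicate n x) y = (if x = y then n else 0)"
  by (induction n) auto

lemma replicate_split_at:
  "k \<le> n \<Longrightarrow> replicate n c = replicate k c @ replicate (n - k) c"
  by (metis le_add_diff_inverse replicate_add)

lemma prefix_replicate:
  "prefix us (replicate n c) \<Longrightarrow> us = replicate (length us) c \<and> length us \<le> n"
  by (metis length_replicate prefix_length_le replicate_eqI set_mono_prefix
      in_set_replicate subsetD)

lemma ab_list_last_b_cases: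
  obtains (only_a) n where "xs = replicate n a"
  | (last_b) ys n where "xs = ys @ b # replicate n a"
proof (cases "b \<in> set xs")
  case True
  then obtain ys zs where "xs = ys @ b # zs" "b \<notin> set zs"
    using split_list_last by metis
  moreover have "zs = replicate (length zs) a"
    using \<open>b \<notin> set zs\<close> by (metis ab.exhaust replicate_length_same)
  ultimately show ?thesis using that(2) by metis
next
  case False
  then show ?thesis using that(1) by (metis ab.exhaust replicate_length_same)
qed

lemma count_list_shuffles:
  "zs \<in> shuffles xs ys \<Longrightarrow> count_list zs c = count_list xs c + count_list ys c"
  by (induction xs ys arbitrary: zs rule: shuffles.induct) auto

lemma append_in_shuffles: "xs @ ys \<in> shuffles ys xs"
  by (induction xs) (auto intro: Cons_in_shuffles_rightI)

lemma insert_in_shuffles: "xs @ ys @ zs \<in> shuffles (xs @ zs) ys"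
  by (induction xs) (auto intro: Cons_in_shuffles_leftI append_in_shuffles)

lemma append_in_shufflesE:
  assumes "zs1 @ zs2 \<in> shuffles xs ys"
  obtains xs1 xs2 ys1 ys2 where "xs = xs1 @ xs2" "ys = ys1 @ ys2"
    "zs1 \<in> shuffles xs1 ys1" "zs2 \<in> shuffles xs2 ys2"
  using assms
proof (induction zs1 arbitrary: xs ys thesis)
  case Nil
  then show ?case by (metis append_Nil Nil_in_shufflesI)
next
  case (Cons z zs1)
  from Cons.prems(2) consider
      (left) xs' where "xs = z # xs'" "zs1 @ zs2 \<in> shuffles xs' ys"
    | (right) ys' where "ys = z # ys'" "zs1 @ zs2 \<in> shuffles xs ys'"
    by (fastforce simp: Cons_in_shuffles_iff neq_Nil_conv)
  then show ?case
  proof cases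
    case left
    show ?thesis
      by (rule Cons.IH[OF _ left(2)], rule Cons.prems(1)[of "z # _"])
        (auto simp: left(1) intro: Cons_in_shuffles_leftI)
  next
    case right
    show ?thesis
      by (rule Cons.IH[OF _ right(2)], rule Cons.prems(1)[of _ _ "z # _"])
        (auto simp: right(1) intro: Cons_in_shuffles_rightI)
  qed
qed

lemma Nil_in_L_eps: "[] \<in> L_eps I"
  by (simp add: L_eps_def)

lemma L_eps_insert: "u \<in> I \<Longrightarrow> y @ v \<in> L_eps I \<Longrightarrow> y @ u @ v \<in> L_eps I"
  unfolding L_eps_def derives_def
  by (auto intro: rtranclp.rtrancl_into_rtrancl insert_in_shuffles)

lemma replicate_in_L_eps: "[c] \<in> I \<Longrightarrow> replicate n c \<in> L_eps I"
  by (induction n) (auto simp: Nil_in_L_eps dest: L_eps_insert[where y = "[]"])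

definition height :: "nat \<Rightarrow> ab list \<Rightarrow> int" where
  "height m w = int m * int (count_list w b) - int (count_list w a)"

lemma height_simps [simp]:
  "height m [] = 0"
  "height m (a # w) = height m w - 1"
  "height m (b # w) = height m w + int m"
  "height m (u @ v) = height m u + height m v"
  "height m (replicate n a) = - int n"
  by (simp_all add: height_def algebra_simps)

definition nonpos_suffix_heights :: "nat \<Rightarrow> ab list \<Rightarrow> bool" where
  "nonpos_suffix_heights m x \<longleftrightarrow> (\<forall>s. suffix s x \<longrightarrow> height m s \<le> 0)"

definition nonneg_prefix_heights :: "nat \<Rightarrow> ab list \<Rightarrow> bool" where
  "nonneg_prefix_heights m x \<longleftrightarrow> (\<forall>p. prefix p x \<longrightarrow> 0 \<le> height m p)"

lemma nonpos_suffix_heights_delete: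
  assumes "nonpos_suffix_heights m (y @ u @ v)" "height m u = 0"
  shows "nonpos_suffix_heights m (y @ v)"
  unfolding nonpos_suffix_heights_def
proof (intro allI impI)
  fix s assume "suffix s (y @ v)"
  then obtain r where "y @ v = r @ s" by (auto simp: suffix_def)
  then consider (in_y) us where "s = us @ v" "suffix us y" | (in_v) "suffix s v"
    by (auto simp: append_eq_append_conv2 suffix_def)
  then show "height m s \<le> 0"
  proof cases
    case in_y
    then have "suffix (us @ u @ v) (y @ u @ v)" by (auto simp: suffix_def)
    then have "height m (us @ u @ v) \<le> 0"
      using assms(1) unfolding nonpos_suffix_heights_def by blast
    then show ?thesis using assms(2) in_y by simp
  next
    case in_v
    then have "suffix s (y @ u @ v)" by (auto intro: suffix_appendI)
    then show ?thesis using assms(1) by (simp add: nonpos_suffix_heights_def)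
  qed
qed

lemma nonneg_prefix_heights_delete:
  assumes "nonneg_prefix_heights m (y @ u @ v)" "height m u = 0"
  shows "nonneg_prefix_heights m (y @ v)"
  unfolding nonneg_prefix_heights_def
proof (intro allI impI)
  fix p assume "prefix p (y @ v)"
  then consider (in_y) "prefix p y" | (in_v) us where "p = y @ us" "prefix us v"
    by (auto simp: prefix_append)
  then show "0 \<le> height m p"
  proof cases
    case in_y
    then have "prefix p (y @ u @ v)" by (auto simp: prefix_append)
    then show ?thesis using assms(1) by (simp add: nonneg_prefix_heights_def)
  next
    case in_v
    then have "prefix (y @ u @ us) (y @ u @ v)" by simp
    then have "0 \<le> height m (y @ u @ us)"
      using assms(1) unfolding nonneg_prefix_heights_def by blast
    then show ?thesis using assms(2) in_v by simp
  qed
qed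

lemma nonneg_prefix_heights_appendD:
  "nonneg_prefix_heights m (x @ y) \<Longrightarrow> nonneg_prefix_heights m x"
  by (auto simp: nonneg_prefix_heights_def prefix_append)

lemma nonpos_suffix_heights_in_L_eps:
  "nonpos_suffix_heights m x \<Longrightarrow> x \<in> L_eps {b # replicate m a, [a]}"
proof (induction "length x" arbitrary: x rule: less_induct)
  case less
  show ?case
  proof (cases x rule: ab_list_last_b_cases)
    case (only_a n)
    then show ?thesis by (simp add: replicate_in_L_eps)
  next
    case (last_b y n)
    then have "suffix (b # replicate n a) x" by (simp add: suffix_def)
    then have "m \<le> n" using less.prems by (auto simp: nonpos_suffix_heights_def)
    then have x: "x = y @ (b # replicate m a) @ replicate (n - m) a"
      using last_b by (simp add: replicate_split_at)
    have "y @ replicate (n - m) a \<in> L_eps {b # replicate m a, [a]}"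
    proof (rule less.hyps)
      show "length (y @ replicate (n - m) a) < length x" using x by simp
      show "nonpos_suffix_heights m (y @ replicate (n - m) a)"
        using nonpos_suffix_heights_delete[of m y "b # replicate m a"] less.prems x by simp
    qed
    then show ?thesis unfolding x by (intro L_eps_insert) auto
  qed
qed

lemma dvd_greater_neg_imp_nonneg:
  fixes k :: int
  assumes "d dvd k" "- d < k"
  shows "0 \<le> k"
proof -
  obtain q where q: "k = d * q" using assms(1) by blast
  then have "0 < d * (q + 1)" using assms(2) by (simp add: algebra_simps)
  then show ?thesis
    using q zero_less_mult_iff[of d "q + 1"] by (auto intro: mult_nonneg_nonneg mult_nonpos_nonpos)
qed

lemma nonneg_prefix_heights_delete_b:
  assumes "nonneg_prefix_heights m (y @ b # replicate n a)"
    and "m dvd count_list (y @ b # replicate n a) a" and "n < m"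
  shows "nonneg_prefix_heights m (y @ replicate n a)"
  unfolding nonneg_prefix_heights_def
proof (intro allI impI)
  define z where "z = y @ replicate n a"
  have "0 \<le> height m y"
    using assms(1) by (simp add: nonneg_prefix_heights_def prefix_append)
  moreover have "int m dvd height m z"
  proof -
    have "int m dvd int (count_list z a)" using assms(2) by (simp add: z_def flip: of_nat_add)
    then show ?thesis unfolding height_def by (intro dvd_diff dvd_triv_left)
  qed
  \<comment> \<open>The height of z is a multiple of m above -m.\<close>
  ultimately have "0 \<le> height m z"
    using assms(3) by (intro dvd_greater_neg_imp_nonneg[of "int m"]) (auto simp: z_def)
  fix p assume "prefix p (y @ replicate n a)"
  then consider (in_y) "prefix p y" | (in_a) us where "p = y @ us" "prefix us (replicate n a)"
    by (auto simp: prefix_append)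
  then show "0 \<le> height m p"
  proof cases
    case in_y
    then show ?thesis using assms(1) by (auto simp: nonneg_prefix_heights_def prefix_append)
  next
    case in_a
    have "height m us = - int (length us)" "length us \<le> n"
      using prefix_replicate[OF in_a(2)] by (metis height_simps(5))+
    then have "height m z \<le> height m p" using in_a(1) by (simp add: z_def)
    then show ?thesis using \<open>0 \<le> height m z\<close> by simp
  qed
qed

lemma nonneg_prefix_heights_in_L_eps:
  "nonneg_prefix_heights m x \<Longrightarrow> m dvd count_list x a \<Longrightarrow> x \<in> L_eps {b # replicate m a, [b]}"
proof (induction "length x" arbitrary: x rule: less_induct)
  case less
  show ?case
  proof (cases x rule: ab_list_last_b_cases)
    case (only_a n)
    have "0 \<le> height m x" using less.prems(1) unfolding nonneg_prefix_heights_def by blast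
    then show ?thesis using only_a by (simp add: Nil_in_L_eps)
  next
    case (last_b y n)
    show ?thesis
    proof (cases "m \<le> n")
      case True
      then have x: "x = y @ (b # replicate m a) @ replicate (n - m) a"
        using last_b by (simp add: replicate_split_at)
      have "y @ replicate (n - m) a \<in> L_eps {b # replicate m a, [b]}"
      proof (rule less.hyps)
        show "length (y @ replicate (n - m) a) < length x" using x by simp
        show "nonneg_prefix_heights m (y @ replicate (n - m) a)"
          using nonneg_prefix_heights_delete[of m y "b # replicate m a"] less.prems(1) x by simp
        show "m dvd count_list (y @ replicate (n - m) a) a"
          using less.prems(2) x by (simp add: add.left_commute[of "count_list y a" m])
      qed
      then show ?thesis unfolding x by (intro L_eps_insert) auto
    next
      case False
      have x: "x = y @ [b] @ replicate n a" using last_b by simp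
      have "y @ replicate n a \<in> L_eps {b # replicate m a, [b]}"
      proof (rule less.hyps)
        show "length (y @ replicate n a) < length x" using x by simp
        show "nonneg_prefix_heights m (y @ replicate n a)"
          using nonneg_prefix_heights_delete_b less.prems False last_b by simp
        show "m dvd count_list (y @ replicate n a) a" using less.prems(2) x by simp
      qed
      then show ?thesis unfolding x by (intro L_eps_insert) auto
    qed
  qed
qed

lemma split_dvd_count_list:
  assumes "0 < m"
  obtains v w where "u = v @ w" "m dvd count_list v c" "count_list w c < m"
proof -
  have "\<exists>v w. u = v @ w \<and> m dvd count_list v c \<and> count_list w c < m"
  proof (induction u rule: rev_induct)
    case Nil
    then show ?case using assms by auto
  next
    case (snoc x u)
    then obtain v w where vw: "u = v @ w" "m dvd count_list v c" "count_list w c < m"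
      by blast
    show ?case
    proof (cases "count_list (w @ [x]) c = m")
      case True
      then show ?thesis using vw by (intro exI[of _ "u @ [x]"] exI[of _ "[]"]) (simp add: assms)
    next
      case False
      then show ?thesis using vw by (intro exI[of _ v] exI[of _ "w @ [x]"]) auto
    qed
  qed
  then show ?thesis using that by blast
qed

lemma shuffle_copies_count_bound:
  assumes "w \<in> shuffle_copies n (b # replicate m a) w'" "0 < m" "w = w1 @ w2"
  shows "n \<le> count_list w1 b + count_list w2 a div m"
  using assms(1,3)
proof (induction n arbitrary: w w1 w2)
  case 0
  then show ?case by simp
next
  case (Suc n)
  then obtain v where v: "v \<in> shuffle_copies n (b # replicate m a) w'"
    "w1 @ w2 \<in> shuffles v (b # replicate m a)"
    by (auto simp: shuffle_copies_def)
  from v(2) obtain v1 v2 u1 u2 where split: "v = v1 @ v2" "b # replicate m a = u1 @ u2"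
     "w1 \<in> shuffles v1 u1" "w2 \<in> shuffles v2 u2"
    by (rule append_in_shufflesE)
  have IH: "n \<le> count_list v1 b + count_list v2 a div m"
    using Suc.IH[OF v(1) split(1)] .
  have counts: "count_list w1 b = count_list v1 b + count_list u1 b"
    "count_list w2 a = count_list v2 a + count_list u2 a"
    using split(3,4) by (simp_all add: count_list_shuffles)
  have "count_list (u1 @ u2) a = m" unfolding split(2)[symmetric] by simp
  show ?case
  proof (cases u1)
    case Nil
    then have "count_list w2 a = count_list v2 a + m"
      using counts(2) \<open>count_list (u1 @ u2) a = m\<close> by simp
    then show ?thesis using IH counts(1) assms(2) by simp
  next
    case (Cons c u1')
    then have "c = b" using split(2) by simp
    then have "count_list v1 b + 1 \<le> count_list w1 b" "count_list v2 a \<le> count_list w2 a"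
      using counts Cons by auto
    then show ?thesis using IH div_le_mono[of "count_list v2 a" "count_list w2 a" m] by linarith
  qed
qed

lemma split_at_min_height:
  obtains w1 u where "w = w1 @ u" "nonpos_suffix_heights m w1" "nonneg_prefix_heights m u"
proof -
  obtain w1 where "is_arg_min (height m) (\<lambda>p. p \<in> set (prefixes w)) w1"
    using ex_is_arg_min_if_finite[of "set (prefixes w)" "height m"] by auto
  then have "prefix w1 w" and min: "\<And>p. prefix p w \<Longrightarrow> height m w1 \<le> height m p"
    by (auto simp: is_arg_min_def not_less)
  then obtain u where w: "w = w1 @ u" by (auto simp: prefix_def)
  have "nonpos_suffix_heights m w1"
    unfolding nonpos_suffix_heights_def
  proof (intro allI impI)
    fix s assume "suffix s w1"
    then obtain r where "w1 = r @ s" by (auto simp: suffix_def)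
    moreover from this have "height m w1 \<le> height m r" by (intro min) (simp add: w)
    ultimately show "height m s \<le> 0" by simp
  qed
  moreover have "nonneg_prefix_heights m u"
    unfolding nonneg_prefix_heights_def
  proof (intro allI impI)
    fix p assume "prefix p u"
    then have "height m w1 \<le> height m (w1 @ p)" by (intro min) (simp add: w)
    then show "0 \<le> height m p" by simp
  qed
  ultimately show ?thesis using that w by blast
qed

theorem lemma14:
  fixes m :: nat
  assumes "m \<ge> 1"
  shows "\<forall>w :: ab list. \<exists>w1 w2 w3.
     w = w1 @ w2 @ w3 \<and>
     w1 \<in> L_eps {b # replicate m a, [a]} \<and>
     w2 \<in> L_eps {b # replicate m a, [b]} \<and>
     count_list w3 a < m \<and>
     (\<forall>x w'. w \<in> shuffle_copies x (b # replicate m a) w' \<longrightarrow>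
        real x \<le> real (count_list w1 b) + real (count_list w2 a) / real m)"
proof (intro allI, goal_cases)
  case (1 w)
  have "0 < m" using assms by simp
  obtain w1 u where w: "w = w1 @ u"
    and suffixes: "nonpos_suffix_heights m w1" and prefixes: "nonneg_prefix_heights m u"
    by (rule split_at_min_height)
  obtain w2 w3 where u: "u = w2 @ w3" and "m dvd count_list w2 a" and "count_list w3 a < m"
    using split_dvd_count_list[OF \<open>0 < m\<close>] .
  then obtain q where q: "count_list w2 a = m * q" by blast
  have "w1 \<in> L_eps {b # replicate m a, [a]}"
    using suffixes by (rule nonpos_suffix_heights_in_L_eps)
  moreover have "w2 \<in> L_eps {b # replicate m a, [b]}"
  proof (rule nonneg_prefix_heights_in_L_eps)
    show "nonneg_prefix_heights m w2"
      using prefixes unfolding u by (rule nonneg_prefix_heights_appendD)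
  qed fact
  moreover have "real x \<le> real (count_list w1 b) + real (count_list w2 a) / real m"
    if "w \<in> shuffle_copies x (b # replicate m a) w'" for x w'
  proof -
    have "count_list (w2 @ w3) a div m = q" using q \<open>count_list w3 a < m\<close> by simp
    then have "x \<le> count_list w1 b + q"
      using shuffle_copies_count_bound[OF that \<open>0 < m\<close>, of w1 "w2 @ w3"] w u by simp
    then show ?thesis using q \<open>0 < m\<close> by simp
  qed
  ultimately show ?case using w u \<open>count_list w3 a < m\<close> by blast
qed

end
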